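(* Let $C^*>0$, $\tilde C_1=C^*+\tfrac12$, $\beta>0$, $A\ge0$, $\tau>0$. Let $V\in\mathcal C_{\rm per}$ be real-valued with $\|V\|_\infty\le C^*$, and let $\phi^n\in\mathcal C_{\rm per}$ satisfy $\|\phi^n\|_2=1$, $\|\phi^n\|_\infty\le\tilde C_1$, $\|\Delta_h\phi^n\|_2\le\tilde C_1$. Let $\tilde\phi^{n+1},\phi^{n+1}$ be produced from $\phi^n$ by the scheme in the context. Let $\Phi^{n+1}\in\mathcal C_{\rm per}$ satisfy $\|\Phi^{n+1}\|_2=1$ and $\|\Delta_h\Phi^{n+1}\|_2\le C^*$, and set $\tilde e^{n+1}=\Phi^{n+1}-\tilde\phi^{n+1}$, $e^{n+1}=\Phi^{n+1}-\phi^{n+1}$. Assume $\|\Delta_h\tilde e^{n+1}\|_2\le2(\tau^{7/8}+h^{7/4})$. Then there exist constants $\tilde C_6,\tilde C_7,\tilde C_8>0$ depending only on $C^*$ and $\beta$, and a threshold on $\tau,h$ depending only on the same quantities, such that for all sufficiently small $\tau,h$: (i) $0\le\|\tilde\phi^{n+1}\|_2-1\le\tilde C_6\tau^2$; (ii) $\|e^{n+1}\|_2^2+(\|\tilde\phi^{n+1}\|_2-1)^2\le\|\tilde e^{n+1}\|_2^2\le2\big(\|e^{n+1}\|_2^2+(\|\tilde\phi^{n+1}\|_2-1)^2\big)$; (iii) $\|\Delta_he^{n+1}\|_2^2\le(1+\tau)\|\Delta_h\tilde e^{n+1}\|_2^2+\tilde C_7\tau^{-1}(\|\tilde\phi^{n+1}\|_2-1)^2$;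 (iv) $\|\Delta_h\tilde e^{n+1}\|_2^2\le2\|\Delta_he^{n+1}\|_2^2+\tilde C_8(\|\tilde\phi^{n+1}\|_2-1)^2$.
   Context: Grid setting: $\Omega=(0,1)^3$, $N=2K+1$ odd, $h=1/N$. $\mathcal C_{\rm per}$ is the space of complex-valued grid functions on the points $(ih,jh,kh)$, $N$-periodic in each index. Discrete inner product $\langle f,g\rangle=h^3\sum_{i,j,k=1}^N\overline{f_{i,j,k}}\,g_{i,j,k}$, $\|f\|_2=\langle f,f\rangle^{1/2}$, $\|f\|_\infty=\max|f_{i,j,k}|$. Forward differences $D_xf_{i+1/2,j,k}=(f_{i+1,j,k}-f_{i,j,k})/h$ (similarly $D_y,D_z$), $\nabla_hf=(D_xf,D_yf,D_zf)$, and $\Delta_h=D_x^2+D_y^2+D_z^2$. Every $f\in\mathcal C_{\rm per}$ has a discrete Fourier expansion $f_{i,j,k}=\sum_{\ell,m,n=-K}^K\hat f_{\ell,m,n}e^{2\pi\mathrm{i}(\ell x_i+my_j+nz_k)}$, and $-\Delta_h$ multiplies $\hat f_{\ell,m,n}$ by $\lambda_{\ell,m,n}=\frac4{h^2}(\sin^2(\ell\pi h)+\sin^2(m\pi h)+\sin^2(n\pi h))$. With $\varphi_1(x)=(1-e^{-x})/x$ for $x>0$, $\varphi_1(0)=1$, $\mathcal G_h=(-\tfrac12\tau\Delta_h)^{-1}(I-e^{\frac12\tau\Delta_h})$ is the Fourier multiplier with symbol $\varphi_1(\tfrac12\tau\lambda_{\ell,m,n})$ and $\mathcal G_h^{1/2}$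 the multiplier with symbol $\varphi_1(\tfrac12\tau\lambda_{\ell,m,n})^{1/2}$, applied componentwise to vector grid functions (so $\|\mathcal G_h^{1/2}\nabla_hf\|_2^2=\langle\mathcal G_hf,-\Delta_hf\rangle$). The scheme: given $\phi^n$, set $\lambda^n=\frac12\|\mathcal G_h^{1/2}\nabla_h\phi^n\|_2^2+\langle V\phi^n+\beta|\phi^n|^2\phi^n,\phi^n\rangle$, define $\tilde\phi^{n+1}$ by $$\frac{\tilde\phi^{n+1}-\phi^n}{\tau}=\frac12\mathcal G_h\Delta_h\phi^n-V\phi^n-\beta|\phi^n|^2\phi^n+\lambda^n\phi^n-A(\tilde\phi^{n+1}-\phi^n)$$ (products pointwise), and $\phi^{n+1}=\tilde\phi^{n+1}/\|\tilde\phi^{n+1}\|_2$. *)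

theory Defs
  imports "HOL-Analysis.Analysis"
begin

text \<open>Grid functions on the points (ih,jh,kh), h = 1/N, indexed by integers;
  membership in C_per is expressed by the predicate gper N.\<close>

type_synonym grid = "int \<Rightarrow> int \<Rightarrow> int \<Rightarrow> complex"

definition gper :: "nat \<Rightarrow> grid \<Rightarrow> bool" where
  "gper N f \<longleftrightarrow> (\<forall>i j k. f (i + int N) j k = f i j k \<and> f i (j + int N) k = f i j k
                          \<and> f i j (k + int N) = f i j k)"

definition gsum :: "nat \<Rightarrow> (int \<Rightarrow> int \<Rightarrow> int \<Rightarrow> 'a::comm_monoid_add) \<Rightarrow> 'a" where
  "gsum N F = (\<Sum>i\<in>{1..int N}. \<Sum>j\<in>{1..int N}. \<Sum>k\<in>{1..int N}. F i j k)"

definition ginner :: "nat \<Rightarrow> grid \<Rightarrow> grid \<Rightarrow> complex" where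
  "ginner N f g = complex_of_real ((1 / real N) ^ 3) * gsum N (\<lambda>i j k. cnj (f i j k) * g i j k)"

definition gnorm2 :: "nat \<Rightarrow> grid \<Rightarrow> real" where
  "gnorm2 N f = sqrt ((1 / real N) ^ 3 * gsum N (\<lambda>i j k. (cmod (f i j k))\<^sup>2))"

definition gnorminf :: "nat \<Rightarrow> grid \<Rightarrow> real" where
  "gnorminf N f = Max ((\<lambda>(i,j,k). cmod (f i j k)) ` ({1..int N} \<times> {1..int N} \<times> {1..int N}))"

text \<open>Forward differences: (Dx f) i j k stores the value at the half point (i+1/2, j, k).\<close>
definition Dx :: "nat \<Rightarrow> grid \<Rightarrow> grid" where
  "Dx N f = (\<lambda>i j k. (f (i + 1) j k - f i j k) * of_nat N)"
definition Dy :: "nat \<Rightarrow> grid \<Rightarrow> grid" where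
  "Dy N f = (\<lambda>i j k. (f i (j + 1) k - f i j k) * of_nat N)"
definition Dz :: "nat \<Rightarrow> grid \<Rightarrow> grid" where
  "Dz N f = (\<lambda>i j k. (f i j (k + 1) - f i j k) * of_nat N)"

definition lap :: "nat \<Rightarrow> grid \<Rightarrow> grid" where
  "lap N f = (\<lambda>i j k.
      (Dx N f i j k - Dx N f (i - 1) j k) * of_nat N
    + (Dy N f i j k - Dy N f i (j - 1) k) * of_nat N
    + (Dz N f i j k - Dz N f i j (k - 1)) * of_nat N)"

text \<open>Discrete Fourier coefficients and Fourier multipliers (N = 2K+1, modes -K..K).\<close>
definition fcoef :: "nat \<Rightarrow> grid \<Rightarrow> int \<Rightarrow> int \<Rightarrow> int \<Rightarrow> complex" where
  "fcoef N f l m n = complex_of_real ((1 / real N) ^ 3) *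
     gsum N (\<lambda>i j k. f i j k *
        exp (- 2 * pi * \<i> * complex_of_real (real_of_int (l * i + m * j + n * k) / real N)))"

definition fmult :: "nat \<Rightarrow> (int \<Rightarrow> int \<Rightarrow> int \<Rightarrow> real) \<Rightarrow> grid \<Rightarrow> grid" where
  "fmult N s f = (\<lambda>i j k.
     (\<Sum>l\<in>{- int (N div 2)..int (N div 2)}. \<Sum>m\<in>{- int (N div 2)..int (N div 2)}.
      \<Sum>n\<in>{- int (N div 2)..int (N div 2)}.
        complex_of_real (s l m n) * fcoef N f l m n *
        exp (2 * pi * \<i> * complex_of_real (real_of_int (l * i + m * j + n * k) / real N))))"

definition lam :: "nat \<Rightarrow> int \<Rightarrow> int \<Rightarrow> int \<Rightarrow> real" where
  "lam N l m n = 4 * (real N)\<^sup>2 *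
     ((sin (real_of_int l * pi / real N))\<^sup>2 + (sin (real_of_int m * pi / real N))\<^sup>2
      + (sin (real_of_int n * pi / real N))\<^sup>2)"

definition phi1 :: "real \<Rightarrow> real" where
  "phi1 x = (if x = 0 then 1 else (1 - exp (- x)) / x)"

definition Gh :: "nat \<Rightarrow> real \<Rightarrow> grid \<Rightarrow> grid" where
  "Gh N \<tau> = fmult N (\<lambda>l m n. phi1 (\<tau> / 2 * lam N l m n))"

definition Gh_half :: "nat \<Rightarrow> real \<Rightarrow> grid \<Rightarrow> grid" where
  "Gh_half N \<tau> = fmult N (\<lambda>l m n. sqrt (phi1 (\<tau> / 2 * lam N l m n)))"

definition gradG_sq :: "nat \<Rightarrow> real \<Rightarrow> grid \<Rightarrow> real" where
  "gradG_sq N \<tau> f = (gnorm2 N (Gh_half N \<tau> (Dx N f)))\<^sup>2 + (gnorm2 N (Gh_half N \<tau> (Dy N f)))\<^sup>2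
                     + (gnorm2 N (Gh_half N \<tau> (Dz N f)))\<^sup>2"

definition lagr :: "nat \<Rightarrow> real \<Rightarrow> grid \<Rightarrow> real \<Rightarrow> grid \<Rightarrow> complex" where
  "lagr N \<tau> V \<beta> \<phi> = complex_of_real (gradG_sq N \<tau> \<phi> / 2)
     + ginner N (\<lambda>i j k. V i j k * \<phi> i j k
                  + complex_of_real \<beta> * (complex_of_real (cmod (\<phi> i j k)))\<^sup>2 * \<phi> i j k) \<phi>"

definition scheme_stage :: "nat \<Rightarrow> real \<Rightarrow> real \<Rightarrow> grid \<Rightarrow> real \<Rightarrow> grid \<Rightarrow> grid \<Rightarrow> bool" where
  "scheme_stage N \<tau> A V \<beta> \<phi> \<phi>t \<longleftrightarrow>
    (\<forall>i j k. (\<phi>t i j k - \<phi> i j k) / complex_of_real \<tau> =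
        Gh N \<tau> (lap N \<phi>) i j k / 2 - V i j k * \<phi> i j k
        - complex_of_real \<beta> * (complex_of_real (cmod (\<phi> i j k)))\<^sup>2 * \<phi> i j k
        + lagr N \<tau> V \<beta> \<phi> * \<phi> i j k
        - complex_of_real A * (\<phi>t i j k - \<phi> i j k))"

end

theory Submission
  imports Defs
begin

(* The first stage reads phi~ = phi + c w with c = tau / (1 + A tau), where w is the explicit
   right-hand side. By Parseval, Re <phi, G_h Delta_h phi> = - |G_h^(1/2) grad_h phi|^2, so the
   Lagrange multiplier makes w orthogonal to phi and |phi~|^2 = 1 + c^2 |w|^2; as G_h is an
   L^2-contraction, |w| is bounded in terms of C* and beta, which gives (i).
   Writing phi~ = s phi^(n+1) with s = |phi~| = 1 + d, the unit vectors Phi and phi^(n+1) satisfy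
   Re <e, phi^(n+1)> = - |e|^2 / 2, hence |e~|^2 = (1 + d) |e|^2 + d^2, which gives (ii).
   Finally Delta_h e = Delta_h e~ + (d / s) Delta_h phi~, where |Delta_h phi~| <= |Delta_h Phi| +
   |Delta_h e~| is bounded, and Young's inequality gives (iii) and (iv). *)

section \<open>Plane waves on the periodic grid\<close>

definition wave :: "nat \<Rightarrow> int \<Rightarrow> complex" where
  "wave N a = exp (2 * pi * \<i> * complex_of_real (real_of_int a / real N))"

lemma wave_add: "wave N (a + b) = wave N a * wave N b"
  unfolding wave_def by (simp add: add_divide_distrib exp_add[symmetric] algebra_simps)

lemma wave_0 [simp]: "wave N 0 = 1"
  unfolding wave_def by simp

lemma cnj_wave: "cnj (wave N a) = wave N (- a)"
  unfolding wave_def by (simp add: exp_cnj)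

lemma wave_periodic:
  assumes "N > 0"
  shows "wave N (a + t * int N) = wave N a"
proof -
  have "wave N (t * int N) = exp (\<i> * (complex_of_int t * (complex_of_real pi * 2)))"
    unfolding wave_def using assms by (simp add: algebra_simps)
  thus ?thesis by (simp add: wave_add exp_2pi_1_int)
qed

lemma wave_eq_if_dvd:
  assumes "N > 0" "int N dvd a - b"
  shows "wave N a = wave N b"
proof -
  from assms(2) obtain t where "a = b + t * int N"
    by (metis add.commute diff_add_cancel dvdE mult.commute)
  then show ?thesis
    by (simp add: wave_periodic[OF assms(1)])
qed

lemma wave_eq_1_imp_dvd:
  assumes "N > 0" "wave N a = 1"
  shows "int N dvd a"
proof -
  from assms(2) obtain t where "Im (2 * pi * \<i> * complex_of_real (real_of_int a / real N)) = real_of_int (2 * t) * pi"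
    unfolding wave_def exp_eq_1 by blast
  hence "real_of_int a = real_of_int t * real N" using assms(1) by (simp add: field_simps)
  hence "a = t * int N" by (metis of_int_eq_iff of_int_mult of_int_of_nat_eq)
  thus ?thesis by simp
qed

lemma sum_periodic_shift:
  fixes G :: "int \<Rightarrow> 'a::comm_monoid_add"
  assumes "\<And>i. G (i + int N) = G i"
  shows "(\<Sum>i\<in>{1..int N}. G (i + a)) = (\<Sum>i\<in>{1..int N}. G i)"
proof -
  have shift1: "(\<Sum>i\<in>{1..int N}. H (i + 1)) = sum H {1..int N}"
    if H: "\<And>i. H (i + int N) = H i" for H :: "int \<Rightarrow> 'a"
  proof (cases "N = 0")
    case False
    have "(\<Sum>i\<in>{1..int N}. H (i + 1)) = sum H {2..int N + 1}"
      by (rule sum.reindex_bij_witness[of _ "\<lambda>i. i - 1" "\<lambda>i. i + 1"]) auto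
    also have "{2..int N + 1} = insert (1 + int N) {2..int N}"
      using False by auto
    also have "{1..int N} = insert 1 {2..int N}"
      using False by auto
    ultimately show ?thesis using H[of 1] by simp
  qed simp
  show ?thesis
  proof (induction a rule: int_induct[where k = 0])
    case (step1 a)
    have "(\<Sum>i\<in>{1..int N}. G (i + (a + 1))) = (\<Sum>i\<in>{1..int N}. G (i + 1 + a))"
      by (simp add: ac_simps)
    also have "\<dots> = (\<Sum>i\<in>{1..int N}. G (i + a))"
      by (rule shift1) (metis assms add.commute add.left_commute)
    finally show ?case using step1 by simp
  next
    case (step2 a)
    have "(\<Sum>i\<in>{1..int N}. G (i + (a - 1))) = (\<Sum>i\<in>{1..int N}. G (i + 1 + (a - 1)))"
      by (rule shift1[symmetric]) (metis assms add.commute add.left_commute)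
    then show ?case using step2 by (simp add: ac_simps)
  qed simp
qed

lemma gsum_periodic_shift:
  assumes "gper N F"
  shows "gsum N (\<lambda>i j k. F (i + a) (j + b) (k + c)) = gsum N F"
proof -
  have per: "F (i + int N) j k = F i j k" "F i (j + int N) k = F i j k" "F i j (k + int N) = F i j k"
    for i j k using assms unfolding gper_def by auto
  have "gsum N (\<lambda>i j k. F (i + a) (j + b) (k + c)) = gsum N (\<lambda>i j k. F (i + a) (j + b) k)"
    unfolding gsum_def by (intro sum.cong refl sum_periodic_shift) (simp add: per)
  also have "\<dots> = gsum N (\<lambda>i j k. F (i + a) j k)"
    unfolding gsum_def by (intro sum.cong refl sum_periodic_shift[where G = "\<lambda>j. \<Sum>k\<in>_. F _ j k"]) (simp add: per)
  also have "\<dots> = gsum N F"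
    unfolding gsum_def by (rule sum_periodic_shift[where G = "\<lambda>i. \<Sum>j\<in>_. \<Sum>k\<in>_. F i j k"]) (simp add: per)
  finally show ?thesis .
qed

lemma sum_wave_period:
  assumes "N > 0" "\<bar>d\<bar> < int N"
  shows "(\<Sum>i\<in>{1..int N}. wave N (d * i)) = (if d = 0 then of_nat N else 0)"
proof (cases "d = 0")
  case False
  let ?T = "\<Sum>i\<in>{1..int N}. wave N (d * i)"
  have "wave N d * ?T = (\<Sum>i\<in>{1..int N}. wave N (d * (i + 1)))"
    by (simp add: sum_distrib_left wave_add[symmetric] algebra_simps)
  also have "\<dots> = ?T"
    by (rule sum_periodic_shift) (simp add: distrib_left wave_periodic[OF assms(1)] mult.commute)
  finally have "(wave N d - 1) * ?T = 0" by (simp add: algebra_simps)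
  moreover have "wave N d \<noteq> 1"
    using wave_eq_1_imp_dvd[OF assms(1)] dvd_imp_le_int[of d "int N"] False assms(2) by auto
  ultimately show ?thesis using False by simp
qed simp

section \<open>The discrete inner product and norm\<close>

definition cube :: "nat \<Rightarrow> (int \<times> int \<times> int) set" where
  "cube N = {1..int N} \<times> {1..int N} \<times> {1..int N}"

definition modes :: "nat \<Rightarrow> (int \<times> int \<times> int) set" where
  "modes N = {- int (N div 2)..int (N div 2)} \<times> {- int (N div 2)..int (N div 2)}
             \<times> {- int (N div 2)..int (N div 2)}"

definition uncurry3 :: "(int \<Rightarrow> int \<Rightarrow> int \<Rightarrow> 'a) \<Rightarrow> int \<times> int \<times> int \<Rightarrow> 'a" where
  "uncurry3 F x = F (fst x) (fst (snd x)) (snd (snd x))"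

definition dot3 :: "int \<times> int \<times> int \<Rightarrow> int \<times> int \<times> int \<Rightarrow> int" where
  "dot3 y x = fst y * fst x + fst (snd y) * fst (snd x) + snd (snd y) * snd (snd x)"

lemma uncurry3_conv [simp]: "uncurry3 F (i, j, k) = F i j k"
  by (simp add: uncurry3_def)

lemma finite_cube [simp]: "finite (cube N)"
  by (simp add: cube_def)

lemma finite_modes [simp]: "finite (modes N)"
  by (simp add: modes_def)

lemma gsum_eq_sum_cube: "gsum N F = (\<Sum>x\<in>cube N. uncurry3 F x)"
  unfolding gsum_def cube_def by (simp add: sum.cartesian_product split_beta uncurry3_def)

lemma norm_le_gnorminf:
  assumes "x \<in> cube N"
  shows "cmod (uncurry3 f x) \<le> gnorminf N f"
proof -
  have "cmod (uncurry3 f x) = (\<lambda>(i, j, k). cmod (f i j k)) x"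
    by (simp add: uncurry3_def split_beta)
  also have "\<dots> \<in> (\<lambda>(i, j, k). cmod (f i j k)) ` cube N"
    using assms by (rule imageI)
  finally show ?thesis
    unfolding gnorminf_def cube_def by (intro Max_ge) auto
qed

lemma mult_cnj_self: "z * cnj z = complex_of_real ((cmod z)\<^sup>2)"
  by (rule complex_norm_square[symmetric])

lemma cnj_mult_self: "cnj z * z = complex_of_real ((cmod z)\<^sup>2)"
  by (metis mult.commute mult_cnj_self)

lemma ginner_eq_sum: "ginner N f g = complex_of_real ((1 / real N) ^ 3) * (\<Sum>x\<in>cube N. cnj (uncurry3 f x) * uncurry3 g x)"
  unfolding ginner_def gsum_eq_sum_cube by (simp add: split_beta uncurry3_def)

lemma gnorm2_sq_eq_sum: "(gnorm2 N f)\<^sup>2 = (1 / real N) ^ 3 * (\<Sum>x\<in>cube N. (cmod (uncurry3 f x))\<^sup>2)"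
  unfolding gnorm2_def gsum_eq_sum_cube by (simp add: split_beta uncurry3_def sum_nonneg)

lemma gnorm2_nonneg [simp]: "0 \<le> gnorm2 N f"
  unfolding gnorm2_def gsum_def by (simp add: sum_nonneg)

lemma gnorm2_eq_L2_set: "gnorm2 N f = sqrt ((1 / real N) ^ 3) * L2_set (\<lambda>x. cmod (uncurry3 f x)) (cube N)"
  unfolding gnorm2_def gsum_eq_sum_cube L2_set_def by (simp add: real_sqrt_mult split_beta uncurry3_def)

lemma ginner_self: "ginner N f f = complex_of_real ((gnorm2 N f)\<^sup>2)"
  unfolding ginner_eq_sum gnorm2_sq_eq_sum by (simp add: cnj_mult_self)

lemma cnj_ginner: "cnj (ginner N f g) = ginner N g f"
  unfolding ginner_eq_sum by (simp add: mult.commute)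

lemma ginner_add_left: "ginner N (\<lambda>i j k. f i j k + g i j k) h = ginner N f h + ginner N g h"
  unfolding ginner_eq_sum by (simp add: uncurry3_def split_beta algebra_simps sum.distrib)

lemma ginner_diff_left: "ginner N (\<lambda>i j k. f i j k - g i j k) h = ginner N f h - ginner N g h"
  unfolding ginner_eq_sum by (simp add: uncurry3_def split_beta algebra_simps sum_subtractf)

lemma ginner_add_right: "ginner N f (\<lambda>i j k. g i j k + h i j k) = ginner N f g + ginner N f h"
  unfolding ginner_eq_sum by (simp add: uncurry3_def split_beta algebra_simps sum.distrib)

lemma ginner_diff_right: "ginner N f (\<lambda>i j k. g i j k - h i j k) = ginner N f g - ginner N f h"
  unfolding ginner_eq_sum by (simp add: uncurry3_def split_beta algebra_simps sum_subtractf)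

lemma ginner_scale_right: "ginner N f (\<lambda>i j k. c * g i j k) = c * ginner N f g"
  unfolding ginner_eq_sum by (simp add: uncurry3_def split_beta sum_distrib_left mult_ac)

lemma ginner_divide_right: "ginner N f (\<lambda>i j k. g i j k / c) = ginner N f g / c"
  unfolding ginner_eq_sum by (simp add: uncurry3_def flip: sum_divide_distrib)

lemma Re_ginner_commute: "Re (ginner N g f) = Re (ginner N f g)"
  by (subst cnj_ginner[symmetric]) simp

lemma gnorm2_add_sq:
  "(gnorm2 N (\<lambda>i j k. f i j k + g i j k))\<^sup>2 = (gnorm2 N f)\<^sup>2 + 2 * Re (ginner N f g) + (gnorm2 N g)\<^sup>2"
proof -
  have pointwise: "(cmod (a + b))\<^sup>2 = (cmod a)\<^sup>2 + 2 * Re (cnj a * b) + (cmod b)\<^sup>2" for a b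
    unfolding cmod_power2 by (simp add: power2_eq_square algebra_simps)
  show ?thesis
    unfolding gnorm2_sq_eq_sum ginner_eq_sum
    by (simp add: pointwise uncurry3_def Re_sum sum.distrib sum_distrib_left algebra_simps)
qed

lemma gnorm2_diff_sq:
  "(gnorm2 N (\<lambda>i j k. f i j k - g i j k))\<^sup>2 = (gnorm2 N f)\<^sup>2 - 2 * Re (ginner N f g) + (gnorm2 N g)\<^sup>2"
proof -
  have pointwise: "(cmod (a - b))\<^sup>2 = (cmod a)\<^sup>2 - 2 * Re (cnj a * b) + (cmod b)\<^sup>2" for a b
    unfolding cmod_power2 by (simp add: power2_eq_square algebra_simps)
  show ?thesis
    unfolding gnorm2_sq_eq_sum ginner_eq_sum
    by (simp add: pointwise uncurry3_def Re_sum sum.distrib sum_subtractf sum_distrib_left algebra_simps)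
qed

lemma gnorm2_le_pointwise:
  assumes "\<And>x. x \<in> cube N \<Longrightarrow> cmod (uncurry3 f x) \<le> B * cmod (uncurry3 g x)" "B \<ge> 0"
  shows "gnorm2 N f \<le> B * gnorm2 N g"
proof -
  have "L2_set (\<lambda>x. cmod (uncurry3 f x)) (cube N) \<le> L2_set (\<lambda>x. B * cmod (uncurry3 g x)) (cube N)"
    by (rule L2_set_mono) (use assms in auto)
  also have "\<dots> = B * L2_set (\<lambda>x. cmod (uncurry3 g x)) (cube N)"
    using assms(2) by (simp add: L2_set_right_distrib)
  finally have "L2_set (\<lambda>x. cmod (uncurry3 f x)) (cube N) \<le> B * L2_set (\<lambda>x. cmod (uncurry3 g x)) (cube N)" .
  from mult_left_mono[OF this, of "sqrt ((1 / real N) ^ 3)"] show ?thesis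
    unfolding gnorm2_eq_L2_set by (simp add: mult_ac)
qed

lemma gnorm2_scale: "gnorm2 N (\<lambda>i j k. c * f i j k) = cmod c * gnorm2 N f"
  unfolding gnorm2_eq_L2_set uncurry3_def by (simp add: L2_set_right_distrib norm_mult mult_ac)

lemma gnorm2_add_le: "gnorm2 N (\<lambda>i j k. f i j k + g i j k) \<le> gnorm2 N f + gnorm2 N g"
proof -
  have "L2_set (\<lambda>x. cmod (uncurry3 f x + uncurry3 g x)) (cube N)
      \<le> L2_set (\<lambda>x. cmod (uncurry3 f x) + cmod (uncurry3 g x)) (cube N)"
    by (rule L2_set_mono) (auto simp: norm_triangle_ineq)
  also have "\<dots> \<le> L2_set (\<lambda>x. cmod (uncurry3 f x)) (cube N) + L2_set (\<lambda>x. cmod (uncurry3 g x)) (cube N)"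
    by (rule L2_set_triangle_ineq)
  finally show ?thesis
    unfolding gnorm2_eq_L2_set uncurry3_def by (simp add: distrib_left[symmetric] mult_left_mono)
qed

lemma gnorm2_diff_le: "gnorm2 N (\<lambda>i j k. f i j k - g i j k) \<le> gnorm2 N f + gnorm2 N g"
  using gnorm2_add_le[of N f "\<lambda>i j k. - g i j k"] gnorm2_scale[of N "- 1" g] by simp

lemma norm_ginner_le: "cmod (ginner N f g) \<le> gnorm2 N f * gnorm2 N g"
proof -
  let ?F = "\<lambda>x. cmod (uncurry3 f x)" and ?G = "\<lambda>x. cmod (uncurry3 g x)"
  have "cmod (ginner N f g) \<le> (1 / real N) ^ 3 * (\<Sum>x\<in>cube N. \<bar>?F x\<bar> * \<bar>?G x\<bar>)"
    unfolding ginner_eq_sum norm_mult norm_of_real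
    by (auto simp: norm_mult intro!: mult_left_mono order.trans[OF norm_sum] sum_mono)
  also have "\<dots> \<le> (1 / real N) ^ 3 * (L2_set ?F (cube N) * L2_set ?G (cube N))"
    by (intro mult_left_mono L2_set_mult_ineq) auto
  also have "\<dots> = gnorm2 N f * gnorm2 N g"
    unfolding gnorm2_eq_L2_set by (simp add: mult_ac power2_eq_square[symmetric] del: real_sqrt_power)
  finally show ?thesis .
qed

section \<open>Discrete Fourier analysis\<close>

lemma fcoef_eq_gsum:
  "fcoef N f l m n = complex_of_real ((1 / real N) ^ 3) * gsum N (\<lambda>i j k. f i j k * wave N (- (l * i + m * j + n * k)))"
proof -
  have kernel: "exp (- 2 * pi * \<i> * complex_of_real (real_of_int a / real N)) = wave N (- a)" for a
    unfolding wave_def by simp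
  show ?thesis
    unfolding fcoef_def kernel by simp
qed

lemma fcoef_eq_sum:
  "uncurry3 (fcoef N f) y = complex_of_real ((1 / real N) ^ 3) * (\<Sum>x\<in>cube N. uncurry3 f x * wave N (- dot3 y x))"
  unfolding fcoef_eq_gsum gsum_eq_sum_cube by (simp add: uncurry3_def dot3_def)

lemma fmult_eq_sum:
  "fmult N s f i j k = (\<Sum>y\<in>modes N. complex_of_real (uncurry3 s y) * uncurry3 (fcoef N f) y * wave N (dot3 y (i, j, k)))"
  unfolding fmult_def modes_def dot3_def wave_def uncurry3_def by (simp add: sum.cartesian_product split_beta)

lemma sum_cube_wave_orthogonal:
  assumes "odd N" "y \<in> modes N" "z \<in> modes N"
  shows "(\<Sum>x\<in>cube N. wave N (dot3 y x) * wave N (- dot3 z x)) = (if y = z then of_nat N ^ 3 else 0)"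
proof -
  obtain l m n l' m' n' where yz: "y = (l, m, n)" "z = (l', m', n')"
    by (cases y, cases z) auto
  have N: "N > 0" using assms(1) by (cases N) auto
  have close: "\<bar>a - b\<bar> < int N"
    if "a \<in> {- int (N div 2)..int (N div 2)}" "b \<in> {- int (N div 2)..int (N div 2)}" for a b
  proof -
    have "2 * int (N div 2) < int N" using assms(1) by presburger
    thus ?thesis using that by auto
  qed
  have factor: "gsum N (\<lambda>i j k. a i * b j * c k) = sum a {1..int N} * sum b {1..int N} * sum c {1..int N}"
    for a b c :: "int \<Rightarrow> complex"
    unfolding gsum_def
    by (simp add: sum_distrib_left[symmetric] sum_distrib_right[symmetric] mult.assoc)
  have "(\<Sum>x\<in>cube N. wave N (dot3 y x) * wave N (- dot3 z x))
      = gsum N (\<lambda>i j k. wave N ((l - l') * i) * wave N ((m - m') * j) * wave N ((n - n') * k))"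
    unfolding gsum_eq_sum_cube yz dot3_def
    by (rule sum.cong) (auto simp: wave_add[symmetric] algebra_simps)
  also have "\<dots> = (if y = z then of_nat N ^ 3 else 0)"
    using assms(2,3) unfolding factor yz modes_def
    by (simp add: sum_wave_period[OF N] close power3_eq_cube)
  finally show ?thesis .
qed

lemma ginner_fmult_right:
  "ginner N g (fmult N s f) =
     (\<Sum>y\<in>modes N. complex_of_real (uncurry3 s y) * uncurry3 (fcoef N f) y * cnj (uncurry3 (fcoef N g) y))"
proof -
  let ?c = "\<lambda>y. complex_of_real (uncurry3 s y) * uncurry3 (fcoef N f) y"
  let ?h = "complex_of_real ((1 / real N) ^ 3)"
  have "ginner N g (fmult N s f) = ?h * (\<Sum>x\<in>cube N. \<Sum>y\<in>modes N. cnj (uncurry3 g x) * (?c y * wave N (dot3 y x)))"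
    unfolding ginner_eq_sum fmult_eq_sum by (simp add: uncurry3_def sum_distrib_left)
  also have "\<dots> = (\<Sum>y\<in>modes N. ?c y * (?h * (\<Sum>x\<in>cube N. cnj (uncurry3 g x) * wave N (dot3 y x))))"
    by (subst sum.swap) (simp add: sum_distrib_left mult_ac)
  also have "\<dots> = (\<Sum>y\<in>modes N. ?c y * cnj (uncurry3 (fcoef N g) y))"
    unfolding fcoef_eq_sum by (simp add: cnj_wave)
  finally show ?thesis .
qed

lemma fcoef_fmult:
  assumes "odd N" "z \<in> modes N"
  shows "uncurry3 (fcoef N (fmult N s f)) z = complex_of_real (uncurry3 s z) * uncurry3 (fcoef N f) z"
proof -
  let ?c = "\<lambda>y. complex_of_real (uncurry3 s y) * uncurry3 (fcoef N f) y"
  have N: "N > 0" using assms(1) by (cases N) auto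
  have "uncurry3 (fcoef N (fmult N s f)) z = complex_of_real ((1 / real N) ^ 3) *
      (\<Sum>x\<in>cube N. \<Sum>y\<in>modes N. ?c y * (wave N (dot3 y x) * wave N (- dot3 z x)))"
    unfolding fcoef_eq_sum[of N "fmult N s f"] fmult_eq_sum
    by (simp add: uncurry3_def sum_distrib_left sum_distrib_right mult_ac)
  also have "\<dots> = complex_of_real ((1 / real N) ^ 3) *
      (\<Sum>y\<in>modes N. ?c y * (\<Sum>x\<in>cube N. wave N (dot3 y x) * wave N (- dot3 z x)))"
    by (subst sum.swap) (simp add: sum_distrib_left)
  also have "\<dots> = complex_of_real ((1 / real N) ^ 3) * (?c z * of_nat N ^ 3)"
    using assms by (simp add: sum_cube_wave_orthogonal if_distrib sum.delta' cong: if_cong)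
  also have "\<dots> = ?c z" using N by (simp add: field_simps)
  finally show ?thesis .
qed

lemma gnorm2_fmult_sq:
  assumes "odd N"
  shows "(gnorm2 N (fmult N s f))\<^sup>2 = (\<Sum>y\<in>modes N. (uncurry3 s y)\<^sup>2 * (cmod (uncurry3 (fcoef N f) y))\<^sup>2)"
proof -
  have "complex_of_real ((gnorm2 N (fmult N s f))\<^sup>2) =
      (\<Sum>y\<in>modes N. complex_of_real (uncurry3 s y) * uncurry3 (fcoef N f) y * cnj (uncurry3 (fcoef N (fmult N s f)) y))"
    unfolding ginner_self[symmetric] by (rule ginner_fmult_right)
  also have "\<dots> = (\<Sum>y\<in>modes N. complex_of_real ((uncurry3 s y)\<^sup>2 * (cmod (uncurry3 (fcoef N f) y))\<^sup>2))"
  proof (intro sum.cong refl)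
    fix y assume "y \<in> modes N"
    then have "cnj (uncurry3 (fcoef N (fmult N s f)) y) = complex_of_real (uncurry3 s y) * cnj (uncurry3 (fcoef N f) y)"
      by (simp add: fcoef_fmult[OF assms])
    then have "complex_of_real (uncurry3 s y) * uncurry3 (fcoef N f) y * cnj (uncurry3 (fcoef N (fmult N s f)) y) =
        complex_of_real (uncurry3 s y) * complex_of_real (uncurry3 s y) * (uncurry3 (fcoef N f) y * cnj (uncurry3 (fcoef N f) y))"
      by (simp add: mult_ac)
    also have "\<dots> = complex_of_real ((uncurry3 s y)\<^sup>2 * (cmod (uncurry3 (fcoef N f) y))\<^sup>2)"
      by (simp only: mult_cnj_self of_real_mult of_real_power power2_eq_square)
    finally show "complex_of_real (uncurry3 s y) * uncurry3 (fcoef N f) y * cnj (uncurry3 (fcoef N (fmult N s f)) y) =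
        complex_of_real ((uncurry3 s y)\<^sup>2 * (cmod (uncurry3 (fcoef N f) y))\<^sup>2)" .
  qed
  finally show ?thesis
    unfolding of_real_sum[symmetric] of_real_eq_iff .
qed

(* Bessel's inequality. *)
lemma sum_norm_fcoef_sq_le:
  assumes "odd N"
  shows "(\<Sum>y\<in>modes N. (cmod (uncurry3 (fcoef N f) y))\<^sup>2) \<le> (gnorm2 N f)\<^sup>2"
proof -
  let ?P = "fmult N (\<lambda>_ _ _. 1) f"
  let ?S = "\<Sum>y\<in>modes N. (cmod (uncurry3 (fcoef N f) y))\<^sup>2"
  have "(gnorm2 N ?P)\<^sup>2 = ?S"
    using gnorm2_fmult_sq[OF assms] by (simp add: uncurry3_def)
  moreover have "Re (ginner N f ?P) = ?S"
    unfolding ginner_fmult_right by (simp add: uncurry3_def mult_cnj_self Re_sum)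
  moreover have "0 \<le> (gnorm2 N (\<lambda>i j k. f i j k - ?P i j k))\<^sup>2"
    by simp
  ultimately show ?thesis
    unfolding gnorm2_diff_sq by simp
qed

lemma gnorm2_fmult_le:
  assumes "odd N" "\<And>y. y \<in> modes N \<Longrightarrow> \<bar>uncurry3 s y\<bar> \<le> 1"
  shows "gnorm2 N (fmult N s f) \<le> gnorm2 N f"
proof (rule power2_le_imp_le)
  have "(gnorm2 N (fmult N s f))\<^sup>2 \<le> (\<Sum>y\<in>modes N. (cmod (uncurry3 (fcoef N f) y))\<^sup>2)"
    unfolding gnorm2_fmult_sq[OF assms(1)]
  proof (rule sum_mono)
    fix y assume "y \<in> modes N"
    hence "(uncurry3 s y)\<^sup>2 \<le> 1" using assms(2) abs_square_le_1 by blast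
    thus "(uncurry3 s y)\<^sup>2 * (cmod (uncurry3 (fcoef N f) y))\<^sup>2 \<le> (cmod (uncurry3 (fcoef N f) y))\<^sup>2"
      by (simp add: mult_left_le_one_le)
  qed
  also have "\<dots> \<le> (gnorm2 N f)\<^sup>2"
    by (rule sum_norm_fcoef_sq_le[OF assms(1)])
  finally show "(gnorm2 N (fmult N s f))\<^sup>2 \<le> (gnorm2 N f)\<^sup>2" .
qed simp

lemma fcoef_translate:
  assumes "N > 0" "gper N g"
  shows "fcoef N (\<lambda>i j k. g (i + a) (j + b) (k + c)) l m n = wave N (l * a + m * b + n * c) * fcoef N g l m n"
proof -
  define F where "F i j k = g i j k * wave N (- (l * i + m * j + n * k))" for i j k
  have "wave N (- (l * (i + int N) + m * j + n * k)) = wave N (- (l * i + m * j + n * k))"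
    and "wave N (- (l * i + m * (j + int N) + n * k)) = wave N (- (l * i + m * j + n * k))"
    and "wave N (- (l * i + m * j + n * (k + int N))) = wave N (- (l * i + m * j + n * k))" for i j k
    by (rule wave_eq_if_dvd[OF assms(1)], simp add: algebra_simps)+
  with assms(2) have "gper N F"
    unfolding gper_def F_def by simp
  have "gsum N (\<lambda>i j k. g (i + a) (j + b) (k + c) * wave N (- (l * i + m * j + n * k)))
      = gsum N (\<lambda>i j k. wave N (l * a + m * b + n * c) * F (i + a) (j + b) (k + c))"
    unfolding F_def by (simp add: mult.commute mult.left_commute wave_add[symmetric] algebra_simps)
  also have "\<dots> = wave N (l * a + m * b + n * c) * gsum N (\<lambda>i j k. F (i + a) (j + b) (k + c))"
    by (simp add: gsum_def sum_distrib_left)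
  also have "\<dots> = wave N (l * a + m * b + n * c) * gsum N F"
    by (simp only: gsum_periodic_shift[OF \<open>gper N F\<close>])
  finally show ?thesis
    unfolding fcoef_eq_gsum F_def by (simp add: mult_ac)
qed

lemma fcoef_linear:
  "fcoef N (\<lambda>i j k. f i j k * c) l m n = fcoef N f l m n * c"
  "fcoef N (\<lambda>i j k. f i j k + g i j k) l m n = fcoef N f l m n + fcoef N g l m n"
  "fcoef N (\<lambda>i j k. f i j k - g i j k) l m n = fcoef N f l m n - fcoef N g l m n"
  unfolding fcoef_eq_gsum gsum_def
  by (simp_all add: algebra_simps sum.distrib sum_subtractf sum_distrib_left sum_distrib_right)

lemma gper_Dx: "gper N f \<Longrightarrow> gper N (Dx N f)"
  and gper_Dy: "gper N f \<Longrightarrow> gper N (Dy N f)"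
  and gper_Dz: "gper N f \<Longrightarrow> gper N (Dz N f)"
  unfolding gper_def Dx_def Dy_def Dz_def by (metis add.commute add.left_commute)+

lemma
  assumes "N > 0" "gper N f"
  shows fcoef_Dx: "fcoef N (Dx N f) l m n = (wave N l - 1) * of_nat N * fcoef N f l m n"
    and fcoef_Dy: "fcoef N (Dy N f) l m n = (wave N m - 1) * of_nat N * fcoef N f l m n"
    and fcoef_Dz: "fcoef N (Dz N f) l m n = (wave N n - 1) * of_nat N * fcoef N f l m n"
  unfolding Dx_def Dy_def Dz_def fcoef_linear
  using fcoef_translate[OF assms, of 1 0 0 l m n] fcoef_translate[OF assms, of 0 1 0 l m n]
    fcoef_translate[OF assms, of 0 0 1 l m n]
  by (simp_all add: algebra_simps)

(* Equal to lam N l m n, as |e^(i t) - 1|^2 = 4 sin^2 (t / 2); this is the form the shift rule produces. *)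
definition lap_symbol :: "nat \<Rightarrow> int \<Rightarrow> int \<Rightarrow> int \<Rightarrow> real" where
  "lap_symbol N l m n =
     (real N)\<^sup>2 * ((cmod (wave N l - 1))\<^sup>2 + (cmod (wave N m - 1))\<^sup>2 + (cmod (wave N n - 1))\<^sup>2)"

lemma fcoef_lap:
  assumes "N > 0" "gper N f"
  shows "fcoef N (lap N f) l m n = - complex_of_real (lap_symbol N l m n) * fcoef N f l m n"
proof -
  have shift_back: "fcoef N (\<lambda>i j k. g (i - 1) j k) l m n = wave N (- l) * fcoef N g l m n"
    "fcoef N (\<lambda>i j k. g i (j - 1) k) l m n = wave N (- m) * fcoef N g l m n"
    "fcoef N (\<lambda>i j k. g i j (k - 1)) l m n = wave N (- n) * fcoef N g l m n"
    if "gper N g" for g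
    using fcoef_translate[OF assms(1) that, of "- 1" 0 0] fcoef_translate[OF assms(1) that, of 0 "- 1" 0]
      fcoef_translate[OF assms(1) that, of 0 0 "- 1"]
    by simp_all
  have second_difference: "(1 - wave N (- a)) * (wave N a - 1) = - complex_of_real ((cmod (wave N a - 1))\<^sup>2)" for a
  proof -
    have "(1 - wave N (- a)) * (wave N a - 1) = - ((wave N a - 1) * cnj (wave N a - 1))"
      by (simp add: cnj_wave[symmetric] algebra_simps)
    then show ?thesis by (simp only: mult_cnj_self)
  qed
  have "fcoef N (lap N f) l m n =
      ((1 - wave N (- l)) * (wave N l - 1) + (1 - wave N (- m)) * (wave N m - 1) + (1 - wave N (- n)) * (wave N n - 1))
        * (of_nat N)\<^sup>2 * fcoef N f l m n"
    unfolding lap_def fcoef_linear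
    by (simp add: shift_back gper_Dx gper_Dy gper_Dz assms fcoef_Dx fcoef_Dy fcoef_Dz algebra_simps power2_eq_square)
  then show ?thesis
    unfolding second_difference lap_symbol_def by (simp add: algebra_simps)
qed

lemma lap_diff: "lap N (\<lambda>i j k. f i j k - g i j k) = (\<lambda>i j k. lap N f i j k - lap N g i j k)"
  unfolding lap_def Dx_def Dy_def Dz_def by (simp add: algebra_simps)

lemma lap_scale: "lap N (\<lambda>i j k. c * f i j k) = (\<lambda>i j k. c * lap N f i j k)"
  unfolding lap_def Dx_def Dy_def Dz_def by (simp add: algebra_simps)

lemma phi1_nonneg: "0 \<le> x \<Longrightarrow> 0 \<le> phi1 x"
  unfolding phi1_def by (simp add: divide_nonneg_nonneg)

lemma phi1_le_1: "0 \<le> x \<Longrightarrow> phi1 x \<le> 1"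
  unfolding phi1_def using exp_ge_add_one_self[of "- x"] by (simp add: divide_le_eq)

lemma lam_nonneg: "0 \<le> lam N l m n"
  unfolding lam_def by simp

definition Gh_symbol :: "nat \<Rightarrow> real \<Rightarrow> int \<times> int \<times> int \<Rightarrow> real" where
  "Gh_symbol N \<tau> = uncurry3 (\<lambda>l m n. phi1 (\<tau> / 2 * lam N l m n))"

lemma gnorm2_Gh_le:
  assumes "odd N" "\<tau> \<ge> 0"
  shows "gnorm2 N (Gh N \<tau> f) \<le> gnorm2 N f"
  unfolding Gh_def using assms
  by (intro gnorm2_fmult_le) (simp_all add: uncurry3_def phi1_nonneg phi1_le_1 lam_nonneg)

lemma gradG_sq_eq_sum:
  assumes "odd N" "\<tau> \<ge> 0" "gper N \<phi>"
  shows "gradG_sq N \<tau> \<phi> =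
    (\<Sum>y\<in>modes N. Gh_symbol N \<tau> y * uncurry3 (lap_symbol N) y * (cmod (uncurry3 (fcoef N \<phi>) y))\<^sup>2)"
proof -
  have N: "N > 0" using assms(1) by (cases N) auto
  have "(sqrt (phi1 (\<tau> / 2 * lam N l m n)))\<^sup>2 = phi1 (\<tau> / 2 * lam N l m n)" for l m n
    using assms(2) by (simp add: phi1_nonneg lam_nonneg)
  then show ?thesis
    unfolding gradG_sq_def Gh_half_def gnorm2_fmult_sq[OF assms(1)] sum.distrib[symmetric]
    by (intro sum.cong refl)
       (simp add: uncurry3_def Gh_symbol_def fcoef_Dx fcoef_Dy fcoef_Dz N assms(3) norm_mult
         power_mult_distrib lap_symbol_def distrib_left distrib_right mult_ac)
qed

lemma Re_ginner_Gh_lap: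
  assumes "odd N" "\<tau> \<ge> 0" "gper N \<phi>"
  shows "Re (ginner N \<phi> (Gh N \<tau> (lap N \<phi>))) = - gradG_sq N \<tau> \<phi>"
proof -
  have N: "N > 0" using assms(1) by (cases N) auto
  have "ginner N \<phi> (Gh N \<tau> (lap N \<phi>)) =
      (\<Sum>y\<in>modes N. - complex_of_real (Gh_symbol N \<tau> y * uncurry3 (lap_symbol N) y * (cmod (uncurry3 (fcoef N \<phi>) y))\<^sup>2))"
    unfolding Gh_def ginner_fmult_right
    by (intro sum.cong refl)
       (simp add: uncurry3_def Gh_symbol_def fcoef_lap[OF N assms(3)] mult_cnj_self mult.assoc)
  then show ?thesis
    unfolding gradG_sq_eq_sum[OF assms] by (simp add: Re_sum sum_negf)
qed

lemma gradG_sq_le: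
  assumes "odd N" "\<tau> \<ge> 0" "gper N \<phi>"
  shows "gradG_sq N \<tau> \<phi> \<le> gnorm2 N \<phi> * gnorm2 N (lap N \<phi>)"
proof -
  have "gradG_sq N \<tau> \<phi> \<le> cmod (ginner N \<phi> (Gh N \<tau> (lap N \<phi>)))"
    using Re_ginner_Gh_lap[OF assms] abs_Re_le_cmod[of "ginner N \<phi> (Gh N \<tau> (lap N \<phi>))"] by linarith
  also have "\<dots> \<le> gnorm2 N \<phi> * gnorm2 N (Gh N \<tau> (lap N \<phi>))"
    by (rule norm_ginner_le)
  also have "\<dots> \<le> gnorm2 N \<phi> * gnorm2 N (lap N \<phi>)"
    by (intro mult_left_mono gnorm2_Gh_le assms) simp
  finally show ?thesis .
qed

lemma gradG_sq_nonneg: "0 \<le> gradG_sq N \<tau> f"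
  unfolding gradG_sq_def by simp

section \<open>The first stage of the scheme\<close>

lemma gnorm2_mult_le:
  assumes "N > 0" "gnorminf N V \<le> C"
  shows "gnorm2 N (\<lambda>i j k. V i j k * \<phi> i j k) \<le> C * gnorm2 N \<phi>"
proof (rule gnorm2_le_pointwise)
  have "(1, 1, 1) \<in> cube N"
    using assms(1) by (simp add: cube_def)
  from norm_le_gnorminf[OF this, of V] show "0 \<le> C"
    using assms(2) by (meson norm_ge_zero order_trans)
  show "cmod (uncurry3 (\<lambda>i j k. V i j k * \<phi> i j k) x) \<le> C * cmod (uncurry3 \<phi> x)" if "x \<in> cube N" for x
    using norm_le_gnorminf[OF that, of V] assms(2)
    by (simp add: uncurry3_def norm_mult mult_right_mono)
qed

lemma gnorm2_cubic_le:
  assumes "gnorminf N \<phi> \<le> M" "\<beta> \<ge> 0"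
  shows "gnorm2 N (\<lambda>i j k. complex_of_real \<beta> * (complex_of_real (cmod (\<phi> i j k)))\<^sup>2 * \<phi> i j k)
    \<le> \<beta> * M\<^sup>2 * gnorm2 N \<phi>"
proof (rule gnorm2_le_pointwise)
  fix x assume "x \<in> cube N"
  then have "(cmod (uncurry3 \<phi> x))\<^sup>2 \<le> M\<^sup>2"
    using norm_le_gnorminf[of x N \<phi>] assms(1) by (intro power_mono) auto
  then show "cmod (uncurry3 (\<lambda>i j k. complex_of_real \<beta> * (complex_of_real (cmod (\<phi> i j k)))\<^sup>2 * \<phi> i j k) x)
      \<le> \<beta> * M\<^sup>2 * cmod (uncurry3 \<phi> x)"
    using assms(2) by (simp add: uncurry3_def norm_mult norm_power mult_right_mono mult_left_mono)
qed (use assms(2) in simp)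

definition scheme_rhs :: "nat \<Rightarrow> real \<Rightarrow> grid \<Rightarrow> real \<Rightarrow> grid \<Rightarrow> grid" where
  "scheme_rhs N \<tau> V \<beta> \<phi> = (\<lambda>i j k. Gh N \<tau> (lap N \<phi>) i j k / 2 - V i j k * \<phi> i j k
     - complex_of_real \<beta> * (complex_of_real (cmod (\<phi> i j k)))\<^sup>2 * \<phi> i j k + lagr N \<tau> V \<beta> \<phi> * \<phi> i j k)"

lemma scheme_stage_eq:
  assumes "\<tau> > 0" "A \<ge> 0" "scheme_stage N \<tau> A V \<beta> \<phi> \<phi>t"
  shows "\<phi>t = (\<lambda>i j k. \<phi> i j k + complex_of_real (\<tau> / (1 + A * \<tau>)) * scheme_rhs N \<tau> V \<beta> \<phi> i j k)"
proof (intro ext)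
  fix i j k
  have "(\<phi>t i j k - \<phi> i j k) / complex_of_real \<tau> = scheme_rhs N \<tau> V \<beta> \<phi> i j k - complex_of_real A * (\<phi>t i j k - \<phi> i j k)"
    using assms(3) unfolding scheme_stage_def scheme_rhs_def by simp
  moreover have "complex_of_real (1 + A * \<tau>) \<noteq> 0"
    using assms(1,2) by (metis add_pos_nonneg mult_nonneg_nonneg less_le of_real_eq_0_iff zero_less_one)
  ultimately show "\<phi>t i j k = \<phi> i j k + complex_of_real (\<tau> / (1 + A * \<tau>)) * scheme_rhs N \<tau> V \<beta> \<phi> i j k"
    using assms(1) by (simp add: field_simps)
qed

lemma Re_ginner_scheme_rhs:
  assumes "odd N" "\<tau> \<ge> 0" "gper N \<phi>" "gnorm2 N \<phi> = 1"
  shows "Re (ginner N \<phi> (scheme_rhs N \<tau> V \<beta> \<phi>)) = 0"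
proof -
  let ?V = "\<lambda>i j k. V i j k * \<phi> i j k"
  let ?B = "\<lambda>i j k. complex_of_real \<beta> * (complex_of_real (cmod (\<phi> i j k)))\<^sup>2 * \<phi> i j k"
  have "ginner N \<phi> (scheme_rhs N \<tau> V \<beta> \<phi>) = ginner N \<phi> (Gh N \<tau> (lap N \<phi>)) / 2
      - ginner N \<phi> ?V - ginner N \<phi> ?B + lagr N \<tau> V \<beta> \<phi> * ginner N \<phi> \<phi>"
    unfolding scheme_rhs_def
    by (simp only: ginner_add_right ginner_diff_right ginner_scale_right ginner_divide_right)
  moreover have "Re (lagr N \<tau> V \<beta> \<phi>) = gradG_sq N \<tau> \<phi> / 2 + Re (ginner N \<phi> ?V) + Re (ginner N \<phi> ?B)"
    unfolding lagr_def ginner_add_left by (simp add: Re_ginner_commute[of N _ \<phi>])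
  ultimately show ?thesis
    using Re_ginner_Gh_lap[OF assms(1-3)] by (simp add: ginner_self assms(4))
qed

lemma norm_lagr_le:
  assumes "odd N" "\<tau> \<ge> 0" "\<beta> \<ge> 0" "gper N \<phi>" "gnorm2 N \<phi> = 1"
    and "gnorminf N V \<le> C" "gnorminf N \<phi> \<le> M" "gnorm2 N (lap N \<phi>) \<le> L"
  shows "cmod (lagr N \<tau> V \<beta> \<phi>) \<le> L / 2 + C + \<beta> * M\<^sup>2"
proof -
  have N: "N > 0" using assms(1) by (cases N) auto
  let ?V = "\<lambda>i j k. V i j k * \<phi> i j k"
  let ?B = "\<lambda>i j k. complex_of_real \<beta> * (complex_of_real (cmod (\<phi> i j k)))\<^sup>2 * \<phi> i j k"
  have "cmod (lagr N \<tau> V \<beta> \<phi>)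
      \<le> cmod (complex_of_real (gradG_sq N \<tau> \<phi> / 2)) + cmod (ginner N (\<lambda>i j k. ?V i j k + ?B i j k) \<phi>)"
    unfolding lagr_def by (rule norm_triangle_ineq)
  also have "cmod (complex_of_real (gradG_sq N \<tau> \<phi> / 2)) \<le> L / 2"
    using gradG_sq_le[OF assms(1,2,4)] gradG_sq_nonneg[of N \<tau> \<phi>] assms(5,8) by simp
  also have "cmod (ginner N (\<lambda>i j k. ?V i j k + ?B i j k) \<phi>) \<le> gnorm2 N ?V + gnorm2 N ?B"
    using norm_ginner_le[of N "\<lambda>i j k. ?V i j k + ?B i j k" \<phi>] gnorm2_add_le[of N ?V ?B] assms(5) by simp
  also have "gnorm2 N ?V + gnorm2 N ?B \<le> C + \<beta> * M\<^sup>2"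
    using gnorm2_mult_le[OF N assms(6), of \<phi>] gnorm2_cubic_le[OF assms(7,3)] assms(5)
    by (intro add_mono) simp_all
  finally show ?thesis by simp
qed

lemma gnorm2_scheme_rhs_le:
  assumes "odd N" "\<tau> \<ge> 0" "\<beta> \<ge> 0" "gper N \<phi>" "gnorm2 N \<phi> = 1"
    and "gnorminf N V \<le> C" "gnorminf N \<phi> \<le> M" "gnorm2 N (lap N \<phi>) \<le> L"
  shows "gnorm2 N (scheme_rhs N \<tau> V \<beta> \<phi>) \<le> L + 2 * C + 2 * \<beta> * M\<^sup>2"
proof -
  have N: "N > 0" using assms(1) by (cases N) auto
  let ?G = "\<lambda>i j k. Gh N \<tau> (lap N \<phi>) i j k / 2"
  let ?V = "\<lambda>i j k. V i j k * \<phi> i j k"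
  let ?B = "\<lambda>i j k. complex_of_real \<beta> * (complex_of_real (cmod (\<phi> i j k)))\<^sup>2 * \<phi> i j k"
  let ?Lagr = "\<lambda>i j k. lagr N \<tau> V \<beta> \<phi> * \<phi> i j k"
  have "gnorm2 N (scheme_rhs N \<tau> V \<beta> \<phi>)
      \<le> gnorm2 N (\<lambda>i j k. ?G i j k - ?V i j k - ?B i j k) + gnorm2 N ?Lagr"
    unfolding scheme_rhs_def by (rule gnorm2_add_le)
  also have "\<dots> \<le> gnorm2 N (\<lambda>i j k. ?G i j k - ?V i j k) + gnorm2 N ?B + gnorm2 N ?Lagr"
    using gnorm2_diff_le[of N "\<lambda>i j k. ?G i j k - ?V i j k" ?B] by simp
  also have "\<dots> \<le> gnorm2 N ?G + gnorm2 N ?V + gnorm2 N ?B + gnorm2 N ?Lagr"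
    using gnorm2_diff_le[of N ?G ?V] by simp
  also have "\<dots> \<le> L / 2 + C + \<beta> * M\<^sup>2 + (L / 2 + C + \<beta> * M\<^sup>2)"
  proof (intro add_mono)
    show "gnorm2 N ?G \<le> L / 2"
      using gnorm2_scale[of N "1 / 2" "Gh N \<tau> (lap N \<phi>)"] gnorm2_Gh_le[OF assms(1,2), of "lap N \<phi>"] assms(8)
      by simp
    show "gnorm2 N ?V \<le> C"
      using gnorm2_mult_le[OF N assms(6), of \<phi>] assms(5) by simp
    show "gnorm2 N ?B \<le> \<beta> * M\<^sup>2"
      using gnorm2_cubic_le[OF assms(7,3)] assms(5) by simp
    show "gnorm2 N ?Lagr \<le> L / 2 + C + \<beta> * M\<^sup>2"
      using norm_lagr_le[OF assms] by (simp add: gnorm2_scale assms(5))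
  qed
  finally show ?thesis by simp
qed

lemma gnorm2_add_orthogonal:
  assumes "gnorm2 N \<phi> = 1" "Re (ginner N \<phi> w) = 0" "0 \<le> c" "c \<le> \<tau>" "gnorm2 N w \<le> W"
  shows "1 \<le> gnorm2 N (\<lambda>i j k. \<phi> i j k + complex_of_real c * w i j k)"
    and "gnorm2 N (\<lambda>i j k. \<phi> i j k + complex_of_real c * w i j k) - 1 \<le> W\<^sup>2 * \<tau>\<^sup>2"
proof -
  let ?s = "gnorm2 N (\<lambda>i j k. \<phi> i j k + complex_of_real c * w i j k)"
  have sq: "?s\<^sup>2 = 1 + (c * gnorm2 N w)\<^sup>2"
    unfolding gnorm2_add_sq using assms(1-3) by (simp add: ginner_scale_right gnorm2_scale power_mult_distrib)
  then have "1\<^sup>2 \<le> ?s\<^sup>2"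
    by simp
  then show "1 \<le> ?s"
    using power2_le_imp_le gnorm2_nonneg by blast
  then have "?s - 1 \<le> ?s\<^sup>2 - 1"
    by (simp add: power2_eq_square)
  also have "\<dots> \<le> (\<tau> * W)\<^sup>2"
    unfolding sq using assms(3-5) by (simp add: power_mono mult_mono)
  finally show "?s - 1 \<le> W\<^sup>2 * \<tau>\<^sup>2"
    by (simp add: power_mult_distrib mult.commute)
qed

lemma scheme_stage_norm_bounds:
  assumes "odd N" "\<tau> > 0" "A \<ge> 0" "\<beta> \<ge> 0" "gper N \<phi>" "gnorm2 N \<phi> = 1"
    and "gnorminf N V \<le> C" "gnorminf N \<phi> \<le> M" "gnorm2 N (lap N \<phi>) \<le> L"
    and "scheme_stage N \<tau> A V \<beta> \<phi> \<phi>t"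
  shows "1 \<le> gnorm2 N \<phi>t" and "gnorm2 N \<phi>t - 1 \<le> (L + 2 * C + 2 * \<beta> * M\<^sup>2)\<^sup>2 * \<tau>\<^sup>2"
proof -
  have "0 \<le> \<tau> / (1 + A * \<tau>)" "\<tau> / (1 + A * \<tau>) \<le> \<tau>"
    using assms(2,3) by (simp_all add: divide_le_eq)
  note bounds = gnorm2_add_orthogonal[OF assms(6) Re_ginner_scheme_rhs[OF assms(1) _ assms(5,6)] this
      gnorm2_scheme_rhs_le[OF assms(1) _ assms(4-9)]]
  show "1 \<le> gnorm2 N \<phi>t" "gnorm2 N \<phi>t - 1 \<le> (L + 2 * C + 2 * \<beta> * M\<^sup>2)\<^sup>2 * \<tau>\<^sup>2"
    unfolding scheme_stage_eq[OF assms(2,3,10)] using bounds assms(2) by simp_all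
qed

section \<open>Normalization\<close>

lemma gnorm2_diff_normalized_sq:
  assumes "gnorm2 N \<Phi> = 1" "gnorm2 N \<phi>t > 0"
  shows "(gnorm2 N (\<lambda>i j k. \<Phi> i j k - \<phi>t i j k))\<^sup>2
    = gnorm2 N \<phi>t * (gnorm2 N (\<lambda>i j k. \<Phi> i j k - \<phi>t i j k / complex_of_real (gnorm2 N \<phi>t)))\<^sup>2
      + (gnorm2 N \<phi>t - 1)\<^sup>2"
proof -
  define s where "s = gnorm2 N \<phi>t"
  define \<phi>1 where "\<phi>1 = (\<lambda>i j k. complex_of_real (1 / s) * \<phi>t i j k)"
  define e where "e = (\<lambda>i j k. \<Phi> i j k - \<phi>1 i j k)"
  have s: "s > 0" using assms(2) by (simp add: s_def)
  have "gnorm2 N \<phi>1 = 1"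
    unfolding \<phi>1_def gnorm2_scale using s by (simp add: s_def norm_divide)
  have "Re (ginner N e \<phi>1) = - (gnorm2 N e)\<^sup>2 / 2"
    unfolding e_def gnorm2_diff_sq ginner_diff_left using \<open>gnorm2 N \<phi>1 = 1\<close> assms(1)
    by (simp add: ginner_self)
  have "(\<lambda>i j k. \<Phi> i j k - \<phi>t i j k) = (\<lambda>i j k. e i j k - complex_of_real (s - 1) * \<phi>1 i j k)"
    unfolding e_def \<phi>1_def using s by (auto simp: field_simps intro!: ext)
  then have "(gnorm2 N (\<lambda>i j k. \<Phi> i j k - \<phi>t i j k))\<^sup>2
      = (gnorm2 N (\<lambda>i j k. e i j k - complex_of_real (s - 1) * \<phi>1 i j k))\<^sup>2"
    by (simp only:)
  also have "\<dots> = (gnorm2 N e)\<^sup>2 - 2 * (s - 1) * Re (ginner N e \<phi>1) + (s - 1)\<^sup>2"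
    unfolding gnorm2_diff_sq ginner_scale_right gnorm2_scale norm_of_real \<open>gnorm2 N \<phi>1 = 1\<close> by simp
  also have "\<dots> = s * (gnorm2 N e)\<^sup>2 + (s - 1)\<^sup>2"
    unfolding \<open>Re (ginner N e \<phi>1) = - (gnorm2 N e)\<^sup>2 / 2\<close> by (simp add: field_simps)
  also have "e = (\<lambda>i j k. \<Phi> i j k - \<phi>t i j k / complex_of_real s)"
    unfolding e_def \<phi>1_def by (simp add: field_simps)
  finally show ?thesis
    unfolding s_def .
qed

lemma normalization_error_bounds:
  fixes \<Phi> \<phi>t :: grid
  assumes "gnorm2 N \<Phi> = 1" "1 \<le> gnorm2 N \<phi>t" "gnorm2 N \<phi>t \<le> 2"
  defines "e \<equiv> \<lambda>i j k. \<Phi> i j k - \<phi>t i j k / complex_of_real (gnorm2 N \<phi>t)"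
    and "d \<equiv> gnorm2 N \<phi>t - 1"
  shows "(gnorm2 N e)\<^sup>2 + d\<^sup>2 \<le> (gnorm2 N (\<lambda>i j k. \<Phi> i j k - \<phi>t i j k))\<^sup>2"
    and "(gnorm2 N (\<lambda>i j k. \<Phi> i j k - \<phi>t i j k))\<^sup>2 \<le> 2 * ((gnorm2 N e)\<^sup>2 + d\<^sup>2)"
proof -
  have et: "(gnorm2 N (\<lambda>i j k. \<Phi> i j k - \<phi>t i j k))\<^sup>2 = (gnorm2 N e)\<^sup>2 + d * (gnorm2 N e)\<^sup>2 + d\<^sup>2"
    using gnorm2_diff_normalized_sq[OF assms(1), of \<phi>t] assms(2)
    unfolding e_def d_def by (simp add: algebra_simps)
  have "0 \<le> d * (gnorm2 N e)\<^sup>2" "d * (gnorm2 N e)\<^sup>2 \<le> (gnorm2 N e)\<^sup>2"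
    using assms(2,3) mult_right_mono[of d 1 "(gnorm2 N e)\<^sup>2"] by (simp_all add: d_def)
  with et show "(gnorm2 N e)\<^sup>2 + d\<^sup>2 \<le> (gnorm2 N (\<lambda>i j k. \<Phi> i j k - \<phi>t i j k))\<^sup>2"
    by linarith
  from \<open>d * (gnorm2 N e)\<^sup>2 \<le> (gnorm2 N e)\<^sup>2\<close> et zero_le_power2[of d]
  show "(gnorm2 N (\<lambda>i j k. \<Phi> i j k - \<phi>t i j k))\<^sup>2 \<le> 2 * ((gnorm2 N e)\<^sup>2 + d\<^sup>2)"
    by argo
qed

lemma le_one_div_sq_add_oneD:
  fixes \<tau> W :: real
  assumes "0 < \<tau>" "\<tau> \<le> 1 / (W\<^sup>2 + 1)"
  shows "\<tau> \<le> 1" and "W\<^sup>2 * \<tau>\<^sup>2 \<le> 1"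
proof -
  have "\<tau> * W\<^sup>2 + \<tau> \<le> 1"
    using assms(2) by (simp add: le_divide_eq add_nonneg_pos distrib_left)
  moreover have "0 \<le> \<tau> * W\<^sup>2"
    using assms(1) by simp
  ultimately have "\<tau> \<le> 1" "\<tau> * W\<^sup>2 \<le> 1"
    using assms(1) by linarith+
  then show "\<tau> \<le> 1"
    by simp
  have "W\<^sup>2 * \<tau>\<^sup>2 = (\<tau> * W\<^sup>2) * \<tau>"
    by (simp only: power2_eq_square[of \<tau>] mult_ac)
  also have "\<dots> \<le> 1 * 1"
    using \<open>\<tau> \<le> 1\<close> \<open>\<tau> * W\<^sup>2 \<le> 1\<close> \<open>0 \<le> \<tau> * W\<^sup>2\<close> assms(1) by (intro mult_mono) simp_all
  finally show "W\<^sup>2 * \<tau>\<^sup>2 \<le> 1"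
    by simp
qed

lemma square_le_Young_split:
  fixes x a b \<tau> :: real
  assumes "0 \<le> x" "x \<le> a + b" "0 \<le> a" "0 \<le> b" "0 < \<tau>" "\<tau> \<le> 1"
  shows "x\<^sup>2 \<le> (1 + \<tau>) * a\<^sup>2 + 2 / \<tau> * b\<^sup>2"
proof -
  have "x\<^sup>2 \<le> (a + b)\<^sup>2"
    using assms by (intro power_mono) auto
  moreover have "2 * a * b \<le> \<tau> * a\<^sup>2 + b\<^sup>2 / \<tau>"
  proof -
    have "0 \<le> (\<tau> * a - b)\<^sup>2 / \<tau>" using assms by simp
    also have "\<dots> = \<tau> * a\<^sup>2 + b\<^sup>2 / \<tau> - 2 * a * b"
      using assms(5) by (simp add: power2_eq_square field_simps)
    finally show ?thesis by simp
  qed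
  moreover have "b\<^sup>2 \<le> b\<^sup>2 / \<tau>"
    using assms mult_right_le_one_le[of "b\<^sup>2" \<tau>] by (simp add: le_divide_eq)
  ultimately show ?thesis
    by (simp add: power2_sum algebra_simps)
qed

lemma square_le_twice_sum_squares:
  fixes x a b :: real
  assumes "0 \<le> x" "x \<le> a + b" "0 \<le> a" "0 \<le> b"
  shows "x\<^sup>2 \<le> 2 * a\<^sup>2 + 2 * b\<^sup>2"
proof -
  have "x\<^sup>2 \<le> (a + b)\<^sup>2"
    using assms by (intro power_mono) auto
  also have "\<dots> \<le> 2 * a\<^sup>2 + 2 * b\<^sup>2"
    using sum_squares_ge_zero[of "a - b" 0] by (simp add: power2_eq_square algebra_simps)
  finally show ?thesis .
qed

lemma lap_normalization_error_bounds:
  fixes \<Phi> \<phi>t :: grid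
  assumes "1 \<le> gnorm2 N \<phi>t" "gnorm2 N (lap N \<phi>t) \<le> D" "0 < \<tau>" "\<tau> \<le> 1"
  defines "s \<equiv> gnorm2 N \<phi>t"
  defines "E \<equiv> lap N (\<lambda>i j k. \<Phi> i j k - \<phi>t i j k / complex_of_real s)"
    and "X \<equiv> lap N (\<lambda>i j k. \<Phi> i j k - \<phi>t i j k)"
  shows "(gnorm2 N E)\<^sup>2 \<le> (1 + \<tau>) * (gnorm2 N X)\<^sup>2 + 2 * D\<^sup>2 / \<tau> * (s - 1)\<^sup>2"
    and "(gnorm2 N X)\<^sup>2 \<le> 2 * (gnorm2 N E)\<^sup>2 + 2 * D\<^sup>2 * (s - 1)\<^sup>2"
proof -
  let ?P = "\<lambda>i j k. complex_of_real ((s - 1) / s) * lap N \<phi>t i j k"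
  have s: "1 \<le> s" using assms(1) by (simp add: s_def)
  have "lap N (\<lambda>i j k. \<phi>t i j k / complex_of_real s) = (\<lambda>i j k. lap N \<phi>t i j k / complex_of_real s)"
    using lap_scale[of N "1 / complex_of_real s" \<phi>t] by simp
  then have E: "E = (\<lambda>i j k. X i j k + ?P i j k)" and X: "X = (\<lambda>i j k. E i j k - ?P i j k)"
    unfolding E_def X_def lap_diff using s by (auto simp: field_simps intro!: ext)
  have "gnorm2 N ?P = (s - 1) / s * gnorm2 N (lap N \<phi>t)"
    unfolding gnorm2_scale norm_of_real using s by simp
  also have "\<dots> \<le> (s - 1) * D"
    using s assms(2) divide_left_mono[of 1 s "s - 1"] by (intro mult_mono) simp_all
  finally have P: "gnorm2 N ?P \<le> (s - 1) * D" .
  have D: "0 \<le> (s - 1) * D"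
    using P gnorm2_nonneg order_trans by blast
  have "gnorm2 N E \<le> gnorm2 N X + (s - 1) * D"
    unfolding E using gnorm2_add_le[of N X ?P] P by simp
  from square_le_Young_split[OF gnorm2_nonneg this gnorm2_nonneg D assms(3,4)]
  show "(gnorm2 N E)\<^sup>2 \<le> (1 + \<tau>) * (gnorm2 N X)\<^sup>2 + 2 * D\<^sup>2 / \<tau> * (s - 1)\<^sup>2"
    by (simp add: power_mult_distrib mult_ac)
  have "gnorm2 N X \<le> gnorm2 N E + (s - 1) * D"
    unfolding X using gnorm2_diff_le[of N E ?P] P by simp
  from square_le_twice_sum_squares[OF gnorm2_nonneg this gnorm2_nonneg D]
  show "(gnorm2 N X)\<^sup>2 \<le> 2 * (gnorm2 N E)\<^sup>2 + 2 * D\<^sup>2 * (s - 1)\<^sup>2"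
    by (simp add: power_mult_distrib mult_ac)
qed

lemma scheme_step_error_estimates:
  fixes \<tau> \<beta> C M L K :: real and N :: nat and \<phi> \<phi>t \<phi>1 \<Phi> :: grid
  defines "W \<equiv> L + 2 * C + 2 * \<beta> * M\<^sup>2"
    and "d \<equiv> gnorm2 N \<phi>t - 1"
    and "e \<equiv> \<lambda>i j k. \<Phi> i j k - \<phi>1 i j k"
    and "et \<equiv> \<lambda>i j k. \<Phi> i j k - \<phi>t i j k"
  assumes N: "odd N" "1 / real N \<le> 1" and \<tau>: "0 < \<tau>" "\<tau> \<le> 1 / (W\<^sup>2 + 1)"
    and A: "A \<ge> 0" and \<beta>: "\<beta> \<ge> 0"
    and V: "gnorminf N V \<le> C"
    and \<phi>: "gper N \<phi>" "gnorm2 N \<phi> = 1" "gnorminf N \<phi> \<le> M" "gnorm2 N (lap N \<phi>) \<le> L"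
    and stage: "scheme_stage N \<tau> A V \<beta> \<phi> \<phi>t"
    and \<phi>1: "\<phi>1 = (\<lambda>i j k. \<phi>t i j k / complex_of_real (gnorm2 N \<phi>t))"
    and \<Phi>: "gnorm2 N \<Phi> = 1" "gnorm2 N (lap N \<Phi>) \<le> K"
      "gnorm2 N (lap N et) \<le> 2 * (\<tau> powr (7/8) + (1 / real N) powr (7/4))"
  shows "0 \<le> d" "d \<le> W\<^sup>2 * \<tau>\<^sup>2"
    and "(gnorm2 N e)\<^sup>2 + d\<^sup>2 \<le> (gnorm2 N et)\<^sup>2" "(gnorm2 N et)\<^sup>2 \<le> 2 * ((gnorm2 N e)\<^sup>2 + d\<^sup>2)"
    and "(gnorm2 N (lap N e))\<^sup>2 \<le> (1 + \<tau>) * (gnorm2 N (lap N et))\<^sup>2 + 2 * (K + 4)\<^sup>2 / \<tau> * d\<^sup>2"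
    and "(gnorm2 N (lap N et))\<^sup>2 \<le> 2 * (gnorm2 N (lap N e))\<^sup>2 + 2 * (K + 4)\<^sup>2 * d\<^sup>2"
proof -
  note bounds = scheme_stage_norm_bounds[OF N(1) \<tau>(1) A \<beta> \<phi>(1,2) V \<phi>(3,4) stage, folded W_def]
  show "0 \<le> d" "d \<le> W\<^sup>2 * \<tau>\<^sup>2"
    using bounds by (simp_all add: d_def)
  have "\<tau> \<le> 1" "W\<^sup>2 * \<tau>\<^sup>2 \<le> 1"
    using le_one_div_sq_add_oneD[OF \<tau>] by simp_all
  have "gnorm2 N \<phi>t \<le> 2"
    using bounds \<open>W\<^sup>2 * \<tau>\<^sup>2 \<le> 1\<close> by (simp add: d_def)
  from normalization_error_bounds[OF \<Phi>(1) bounds(1) this]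
  show "(gnorm2 N e)\<^sup>2 + d\<^sup>2 \<le> (gnorm2 N et)\<^sup>2" "(gnorm2 N et)\<^sup>2 \<le> 2 * ((gnorm2 N e)\<^sup>2 + d\<^sup>2)"
    unfolding e_def et_def d_def \<phi>1 by simp_all
  have "\<tau> powr (7/8) \<le> 1" "(1 / real N) powr (7/4) \<le> 1"
    using \<open>\<tau> \<le> 1\<close> \<tau>(1) N(2) by (simp_all add: powr_le1)
  then have "gnorm2 N (lap N \<phi>t) \<le> K + 4"
    using gnorm2_diff_le[of N "lap N \<Phi>" "lap N et"] \<Phi>(2,3) by (simp add: et_def lap_diff)
  from lap_normalization_error_bounds[OF bounds(1) this \<tau>(1) \<open>\<tau> \<le> 1\<close>, of \<Phi>]
  show "(gnorm2 N (lap N e))\<^sup>2 \<le> (1 + \<tau>) * (gnorm2 N (lap N et))\<^sup>2 + 2 * (K + 4)\<^sup>2 / \<tau> * d\<^sup>2"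
    "(gnorm2 N (lap N et))\<^sup>2 \<le> 2 * (gnorm2 N (lap N e))\<^sup>2 + 2 * (K + 4)\<^sup>2 * d\<^sup>2"
    unfolding e_def et_def d_def \<phi>1 by simp_all
qed

theorem proposition4p3:
  fixes Cs \<beta> :: real
  assumes "Cs > 0" and "\<beta> > 0"
  shows "\<exists>C6 C7 C8 \<tau>0 h0. C6 > 0 \<and> C7 > 0 \<and> C8 > 0 \<and> \<tau>0 > 0 \<and> h0 > 0 \<and>
    (\<forall>(N::nat) (\<tau>::real) (A::real) (V::grid) (\<phi>::grid) (\<phi>t::grid) (\<phi>1::grid) (\<Phi>::grid).
       odd N \<and> \<tau> > 0 \<and> \<tau> \<le> \<tau>0 \<and> 1 / real N \<le> h0 \<and> A \<ge> 0
       \<and> gper N V \<and> (\<forall>i j k. Im (V i j k) = 0) \<and> gnorminf N V \<le> Cs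
       \<and> gper N \<phi> \<and> gnorm2 N \<phi> = 1 \<and> gnorminf N \<phi> \<le> Cs + 1/2
       \<and> gnorm2 N (lap N \<phi>) \<le> Cs + 1/2
       \<and> scheme_stage N \<tau> A V \<beta> \<phi> \<phi>t
       \<and> \<phi>1 = (\<lambda>i j k. \<phi>t i j k / complex_of_real (gnorm2 N \<phi>t))
       \<and> gper N \<Phi> \<and> gnorm2 N \<Phi> = 1 \<and> gnorm2 N (lap N \<Phi>) \<le> Cs
       \<and> gnorm2 N (lap N (\<lambda>i j k. \<Phi> i j k - \<phi>t i j k))
            \<le> 2 * (\<tau> powr (7/8) + (1 / real N) powr (7/4))
     \<longrightarrow>
       (let et = (\<lambda>i j k. \<Phi> i j k - \<phi>t i j k);
            e = (\<lambda>i j k. \<Phi> i j k - \<phi>1 i j k);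
            d = gnorm2 N \<phi>t - 1 in
         0 \<le> d \<and> d \<le> C6 * \<tau>\<^sup>2
       \<and> (gnorm2 N e)\<^sup>2 + d\<^sup>2 \<le> (gnorm2 N et)\<^sup>2
       \<and> (gnorm2 N et)\<^sup>2 \<le> 2 * ((gnorm2 N e)\<^sup>2 + d\<^sup>2)
       \<and> (gnorm2 N (lap N e))\<^sup>2 \<le> (1 + \<tau>) * (gnorm2 N (lap N et))\<^sup>2 + C7 / \<tau> * d\<^sup>2
       \<and> (gnorm2 N (lap N et))\<^sup>2 \<le> 2 * (gnorm2 N (lap N e))\<^sup>2 + C8 * d\<^sup>2))"
proof -
  define W where "W = Cs + 1/2 + 2 * Cs + 2 * \<beta> * (Cs + 1/2)\<^sup>2"
  have "W > 0"
    using assms by (simp add: W_def add_pos_nonneg)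
  note estimates = scheme_step_error_estimates[where C = Cs and M = "Cs + 1/2" and L = "Cs + 1/2"
      and K = Cs, OF _ _ _ _ _ less_imp_le[OF assms(2)], folded W_def]
  show ?thesis
    unfolding Let_def
    by (rule exI[of _ "W\<^sup>2"], rule exI[of _ "2 * (Cs + 4)\<^sup>2"], rule exI[of _ "2 * (Cs + 4)\<^sup>2"],
        rule exI[of _ "1 / (W\<^sup>2 + 1)"], rule exI[of _ 1],
        intro conjI allI impI; (elim conjE, rule estimates; assumption)?)
       (use \<open>W > 0\<close> assms in \<open>simp_all add: add_pos_pos\<close>)
qed

end
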